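(* Let $\phi:A_1\to A_2$ be an isomorphism of double Poisson algebras over $B=\bigoplus_{s\in I}\Bbbk e_s$. If $A_1,A_2$ are Hamiltonian algebras with moment maps $\mu_1,\mu_2$, then $\mu_2-\phi(\mu_1)\in B$ and $\operatorname{Cas}(A_1)=\operatorname{Cas}(A_2)=B$. In particular, a moment map on a double Poisson algebra is unique up to the addition of an element of $B$.
   Context: $\Bbbk$ field of characteristic $0$; algebras associative, unital, finitely generated; $B=\bigoplus_{s\in I}\Bbbk e_s$ with orthogonal idempotents summing to $1$. Sweedler notation, $(d'\otimes d'')^\circ=d''\otimes d'$, outer bimodule $a(d'\otimes d'')b=ad'\otimes d''b$. A $B$-linear double bracket: bilinear $\{\!\{-,-\}\!\}:A\times A\to A\otimes A$, $\{\!\{a,b\}\!\}=-\{\!\{b,a\}\!\}^\circ$, $\{\!\{a,bc\}\!\}=\{\!\{a,b\}\!\}c+b\{\!\{a,c\}\!\}$, zero if an argument lies in $B$. Double Poisson: the triple bracket $\{\!\{a,\{\!\{b,c\}\!\}'\}\!\}\otimes\{\!\{b,c\}\!\}''+\tau(\{\!\{b,\{\!\{c,a\}\!\}'\}\!\}\otimes\{\!\{c,a\}\!\}'')+\tau^2(\{\!\{c,\{\!\{a,b\}\!\}'\}\!\}\otimes\{\!\{a,b\}\!\}'')$ vanishes, $\tau(a_1\otimes a_2\otimes a_3)=a_3\otimes a_1\otimes a_2$. A moment map is $\mu=\sum_s\mu_s$, $\mu_s\in e_sAe_s$, with $\{\!\{\mu_s,a\}\!\}=ae_s\otimes e_s-e_s\otimes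 e_sa$ for all $a$; Hamiltonian algebra = double Poisson algebra with moment map. An isomorphism of double Poisson algebras is a $B$-algebra isomorphism $\phi$ with $\{\!\{\phi a,\phi b\}\!\}_2=(\phi\otimes\phi)\{\!\{a,b\}\!\}_1$. The set of Casimir elements is $\operatorname{Cas}(A)=\{a\in A\mid\{\!\{a,b\}\!\}=0\text{ for all }b\in A\}$. *)

theory Defs
  imports Main "HOL.Vector_Spaces" "HOL-Library.Function_Algebras"
begin

text \<open>Tensor products over k are represented faithfully via the canonical injective
map from A (x) A into the dual of the space of k-bilinear forms on A: the pure tensor
x (x) y is the functional f |-> f x y on bilinear forms (extended by 0 to
non-bilinear f). Similarly for A (x) A (x) A with trilinear forms.\<close>

definition k_algebra :: "('k::field \<Rightarrow> 'a::ring_1 \<Rightarrow> 'a) \<Rightarrow> bool" where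
  "k_algebra sm \<longleftrightarrow> vector_space sm \<and>
     (\<forall>c x y. sm c (x * y) = sm c x * y \<and> sm c (x * y) = x * sm c y)"

inductive_set alg_gen :: "('k \<Rightarrow> 'a::ring_1 \<Rightarrow> 'a) \<Rightarrow> 'a set \<Rightarrow> 'a set"
  for sm :: "'k \<Rightarrow> 'a \<Rightarrow> 'a" and G :: "'a set" where
  gen: "x \<in> G \<Longrightarrow> x \<in> alg_gen sm G"
| one: "1 \<in> alg_gen sm G"
| add: "x \<in> alg_gen sm G \<Longrightarrow> y \<in> alg_gen sm G \<Longrightarrow> x + y \<in> alg_gen sm G"
| mult: "x \<in> alg_gen sm G \<Longrightarrow> y \<in> alg_gen sm G \<Longrightarrow> x * y \<in> alg_gen sm G"
| smult: "x \<in> alg_gen sm G \<Longrightarrow> sm c x \<in> alg_gen sm G"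

definition fin_gen :: "('k \<Rightarrow> 'a::ring_1 \<Rightarrow> 'a) \<Rightarrow> bool" where
  "fin_gen sm \<longleftrightarrow> (\<exists>G. finite G \<and> alg_gen sm G = UNIV)"

definition bilin :: "('k::field \<Rightarrow> 'a::ring_1 \<Rightarrow> 'a) \<Rightarrow> ('a \<Rightarrow> 'a \<Rightarrow> 'k) \<Rightarrow> bool" where
  "bilin sm f \<longleftrightarrow>
     (\<forall>x x' y. f (x + x') y = f x y + f x' y) \<and>
     (\<forall>x y y'. f x (y + y') = f x y + f x y') \<and>
     (\<forall>c x y. f (sm c x) y = c * f x y \<and> f x (sm c y) = c * f x y)"

definition trilin :: "('k::field \<Rightarrow> 'a::ring_1 \<Rightarrow> 'a) \<Rightarrow> ('a \<Rightarrow> 'a \<Rightarrow> 'a \<Rightarrow> 'k) \<Rightarrow> bool" where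
  "trilin sm g \<longleftrightarrow>
     (\<forall>x x' y z. g (x + x') y z = g x y z + g x' y z) \<and>
     (\<forall>x y y' z. g x (y + y') z = g x y z + g x y' z) \<and>
     (\<forall>x y z z'. g x y (z + z') = g x y z + g x y z') \<and>
     (\<forall>c x y z. g (sm c x) y z = c * g x y z \<and> g x (sm c y) z = c * g x y z \<and>
                g x y (sm c z) = c * g x y z)"

type_synonym ('a, 'k) tens2 = "('a \<Rightarrow> 'a \<Rightarrow> 'k) \<Rightarrow> 'k"
type_synonym ('a, 'k) tens3 = "('a \<Rightarrow> 'a \<Rightarrow> 'a \<Rightarrow> 'k) \<Rightarrow> 'k"

definition tens :: "('k::field \<Rightarrow> 'a::ring_1 \<Rightarrow> 'a) \<Rightarrow> 'a \<Rightarrow> 'a \<Rightarrow> ('a, 'k) tens2" where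
  "tens sm x y = (\<lambda>f. if bilin sm f then f x y else 0)"

definition in_T2 :: "('k::field \<Rightarrow> 'a::ring_1 \<Rightarrow> 'a) \<Rightarrow> ('a, 'k) tens2 \<Rightarrow> bool" where
  "in_T2 sm t \<longleftrightarrow> (\<exists>xs. t = sum_list (map (\<lambda>(x, y). tens sm x y) xs))"

definition tscale :: "'k::field \<Rightarrow> ('a, 'k) tens2 \<Rightarrow> ('a, 'k) tens2" where
  "tscale c t = (\<lambda>f. c * t f)"

definition tswap :: "('k::field \<Rightarrow> 'a::ring_1 \<Rightarrow> 'a) \<Rightarrow> ('a, 'k) tens2 \<Rightarrow> ('a, 'k) tens2" where
  "tswap sm t = (\<lambda>f. if bilin sm f then t (\<lambda>x y. f y x) else 0)"

text \<open>outer bimodule structure: b (d' (x) d'') c = b d' (x) d'' c\<close>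
definition rmul :: "('k::field \<Rightarrow> 'a::ring_1 \<Rightarrow> 'a) \<Rightarrow> ('a, 'k) tens2 \<Rightarrow> 'a \<Rightarrow> ('a, 'k) tens2" where
  "rmul sm t c = (\<lambda>f. if bilin sm f then t (\<lambda>x y. f x (y * c)) else 0)"

definition lmul :: "('k::field \<Rightarrow> 'a::ring_1 \<Rightarrow> 'a) \<Rightarrow> 'a \<Rightarrow> ('a, 'k) tens2 \<Rightarrow> ('a, 'k) tens2" where
  "lmul sm b t = (\<lambda>f. if bilin sm f then t (\<lambda>x y. f (b * x) y) else 0)"

definition idem_system :: "('i \<Rightarrow> 'a::ring_1) \<Rightarrow> 'i set \<Rightarrow> bool" where
  "idem_system e I \<longleftrightarrow> finite I \<and>
     (\<forall>s\<in>I. \<forall>t\<in>I. e s * e t = (if s = t then e s else 0)) \<and>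
     (\<Sum>s\<in>I. e s) = 1"

definition Bset :: "('k::field \<Rightarrow> 'a::ring_1 \<Rightarrow> 'a) \<Rightarrow> ('i \<Rightarrow> 'a) \<Rightarrow> 'i set \<Rightarrow> 'a set" where
  "Bset sm e I = {x. \<exists>c. x = (\<Sum>s\<in>I. sm (c s) (e s))}"

definition double_bracket ::
  "('k::field \<Rightarrow> 'a::ring_1 \<Rightarrow> 'a) \<Rightarrow> ('i \<Rightarrow> 'a) \<Rightarrow> 'i set \<Rightarrow> ('a \<Rightarrow> 'a \<Rightarrow> ('a, 'k) tens2) \<Rightarrow> bool" where
  "double_bracket sm e I dbr \<longleftrightarrow>
     (\<forall>a b. in_T2 sm (dbr a b)) \<and>
     (\<forall>a a' b. dbr (a + a') b = dbr a b + dbr a' b) \<and>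
     (\<forall>a b b'. dbr a (b + b') = dbr a b + dbr a b') \<and>
     (\<forall>c a b. dbr (sm c a) b = tscale c (dbr a b) \<and> dbr a (sm c b) = tscale c (dbr a b)) \<and>
     (\<forall>a b. dbr a b = - tswap sm (dbr b a)) \<and>
     (\<forall>a b c. dbr a (b * c) = rmul sm (dbr a b) c + lmul sm b (dbr a c)) \<and>
     (\<forall>a b. a \<in> Bset sm e I \<or> b \<in> Bset sm e I \<longrightarrow> dbr a b = 0)"

text \<open>the linear map d' (x) d'' |-> {{a, d'}} (x) d''\<close>
definition ext_left ::
  "('k::field \<Rightarrow> 'a::ring_1 \<Rightarrow> 'a) \<Rightarrow> ('a \<Rightarrow> 'a \<Rightarrow> ('a, 'k) tens2) \<Rightarrow> 'a \<Rightarrow> ('a, 'k) tens2 \<Rightarrow> ('a, 'k) tens3" where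
  "ext_left sm dbr a t = (\<lambda>g. if trilin sm g then t (\<lambda>x y. dbr a x (\<lambda>u v. g u v y)) else 0)"

text \<open>tau (a1 (x) a2 (x) a3) = a3 (x) a1 (x) a2\<close>
definition tau :: "('k::field \<Rightarrow> 'a::ring_1 \<Rightarrow> 'a) \<Rightarrow> ('a, 'k) tens3 \<Rightarrow> ('a, 'k) tens3" where
  "tau sm w = (\<lambda>g. if trilin sm g then w (\<lambda>x y z. g z x y) else 0)"

definition triple_bracket ::
  "('k::field \<Rightarrow> 'a::ring_1 \<Rightarrow> 'a) \<Rightarrow> ('a \<Rightarrow> 'a \<Rightarrow> ('a, 'k) tens2) \<Rightarrow> 'a \<Rightarrow> 'a \<Rightarrow> 'a \<Rightarrow> ('a, 'k) tens3" where
  "triple_bracket sm dbr a b c =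
     ext_left sm dbr a (dbr b c) + tau sm (ext_left sm dbr b (dbr c a))
     + tau sm (tau sm (ext_left sm dbr c (dbr a b)))"

definition double_poisson ::
  "('k::field \<Rightarrow> 'a::ring_1 \<Rightarrow> 'a) \<Rightarrow> ('i \<Rightarrow> 'a) \<Rightarrow> 'i set \<Rightarrow> ('a \<Rightarrow> 'a \<Rightarrow> ('a, 'k) tens2) \<Rightarrow> bool" where
  "double_poisson sm e I dbr \<longleftrightarrow> double_bracket sm e I dbr \<and>
     (\<forall>a b c. triple_bracket sm dbr a b c = 0)"

definition moment_map ::
  "('k::field \<Rightarrow> 'a::ring_1 \<Rightarrow> 'a) \<Rightarrow> ('i \<Rightarrow> 'a) \<Rightarrow> 'i set \<Rightarrow> ('a \<Rightarrow> 'a \<Rightarrow> ('a, 'k) tens2) \<Rightarrow> 'a \<Rightarrow> bool" where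
  "moment_map sm e I dbr \<mu> \<longleftrightarrow> (\<exists>\<mu>s. \<mu> = (\<Sum>s\<in>I. \<mu>s s) \<and>
     (\<forall>s\<in>I. (\<exists>x. \<mu>s s = e s * x * e s) \<and>
        (\<forall>a. dbr (\<mu>s s) a = tens sm (a * e s) (e s) - tens sm (e s) (e s * a))))"

definition Cas :: "('a \<Rightarrow> 'a \<Rightarrow> ('a, 'k::field) tens2) \<Rightarrow> 'a set" where
  "Cas dbr = {a. \<forall>b. dbr a b = 0}"

text \<open>phi (x) phi on A1 (x) A1 -> A2 (x) A2\<close>
definition tmap ::
  "('k::field \<Rightarrow> 'b::ring_1 \<Rightarrow> 'b) \<Rightarrow> ('a \<Rightarrow> 'b) \<Rightarrow> ('a, 'k) tens2 \<Rightarrow> ('b, 'k) tens2" where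
  "tmap sm2 \<phi> t = (\<lambda>f. if bilin sm2 f then t (\<lambda>x y. f (\<phi> x) (\<phi> y)) else 0)"

definition dp_iso ::
  "('k::field \<Rightarrow> 'a::ring_1 \<Rightarrow> 'a) \<Rightarrow> ('i \<Rightarrow> 'a) \<Rightarrow> ('a \<Rightarrow> 'a \<Rightarrow> ('a, 'k) tens2) \<Rightarrow>
   ('k \<Rightarrow> 'b::ring_1 \<Rightarrow> 'b) \<Rightarrow> ('i \<Rightarrow> 'b) \<Rightarrow> ('b \<Rightarrow> 'b \<Rightarrow> ('b, 'k) tens2) \<Rightarrow>
   'i set \<Rightarrow> ('a \<Rightarrow> 'b) \<Rightarrow> bool" where
  "dp_iso sm1 e1 dbr1 sm2 e2 dbr2 I \<phi> \<longleftrightarrow>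
     bij \<phi> \<and>
     (\<forall>x y. \<phi> (x + y) = \<phi> x + \<phi> y \<and> \<phi> (x * y) = \<phi> x * \<phi> y) \<and> \<phi> 1 = 1 \<and>
     (\<forall>c x. \<phi> (sm1 c x) = sm2 c (\<phi> x)) \<and>
     (\<forall>s\<in>I. \<phi> (e1 s) = e2 s) \<and>
     (\<forall>a b. dbr2 (\<phi> a) (\<phi> b) = tmap sm2 \<phi> (dbr1 a b))"

end

theory Submission
  imports Defs
begin

(* A Casimir element a brackets to zero with each component mu_s of a moment map, and the
   defining identity of mu_s turns this into a e_s (x) e_s = e_s (x) e_s a. Testing against
   bilinear forms built from coordinates shows that a e_s is a scalar multiple of e_s, so
   a = sum_s a e_s lies in B. The bracket with a moment map depends only on its argument and
   the idempotents, both of which an isomorphism respects; hence mu_2 - phi(mu_1), and likewise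
   the difference of two moment maps, is a Casimir element. *)

lemma tens_eq_imp_scalar_multiple:
  fixes sm :: "'k::field \<Rightarrow> 'a::ring_1 \<Rightarrow> 'a"
  assumes vs: "vector_space sm" and "e \<noteq> 0" and eq: "tens sm x e = tens sm e y"
  shows "\<exists>c. x = sm c e"
proof -
  interpret vector_space sm by (rule vs)
  define Bs where "Bs = extend_basis {}"
  have ind: "independent Bs" and sp: "\<And>u. u \<in> span Bs"
    unfolding Bs_def by (simp_all add: independent_extend_basis independent_empty)
  define R where "R u = representation Bs u" for u
  have R_add: "R (u + w) b = R u b + R w b" for u w b
    unfolding R_def using representation_add[OF ind sp sp] by simp
  have R_scale: "R (sm c u) b = c * R u b" for c u b
    unfolding R_def using representation_scale[OF ind sp] by simp
  have R_inj: "R u = R w \<Longrightarrow> u = w" for u w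
    unfolding R_def by (metis ind sp sum_nonzero_representation_eq)
  have "R e \<noteq> R 0" using \<open>e \<noteq> 0\<close> R_inj by blast
  then obtain b0 where b0: "R e b0 \<noteq> 0" by (auto simp: R_def representation_zero)
  define c where "c = R y b0 / R e b0"
  have "R x b = R (sm c e) b" for b
  proof -
    have "bilin sm (\<lambda>u v. R u b * R v b0)"
      unfolding bilin_def by (simp add: R_add R_scale algebra_simps)
    then have "R x b * R e b0 = R e b * R y b0"
      using fun_cong[OF eq, of "\<lambda>u v. R u b * R v b0"] by (simp add: tens_def)
    then show ?thesis using b0 by (simp add: R_scale c_def field_simps)
  qed
  then show ?thesis using R_inj by blast
qed

lemma double_bracket_zero_left:
  assumes "double_bracket sm e I dbr"
  shows "dbr 0 b = 0"
proof -
  have "dbr (0 + 0) b = dbr 0 b + dbr 0 b"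
    using assms unfolding double_bracket_def by blast
  then show ?thesis by simp
qed

lemma double_bracket_diff_left:
  assumes "double_bracket sm e I dbr"
  shows "dbr (x - y) b = dbr x b - dbr y b"
proof -
  have "dbr ((x - y) + y) b = dbr (x - y) b + dbr y b"
    using assms unfolding double_bracket_def by blast
  then show ?thesis by (simp add: algebra_simps)
qed

lemma double_bracket_sum_left:
  assumes "double_bracket sm e I dbr"
  shows "dbr (sum f J) b = (\<Sum>s\<in>J. dbr (f s) b)"
proof (induction J rule: infinite_finite_induct)
  case (insert x F)
  have "dbr (f x + sum f F) b = dbr (f x) b + dbr (sum f F) b"
    using assms unfolding double_bracket_def by blast
  then show ?case using insert by simp
qed (simp_all add: double_bracket_zero_left[OF assms])

lemma double_bracket_zero_right_imp_zero_left:
  assumes "double_bracket sm e I dbr" and "dbr a b = 0"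
  shows "dbr b a = 0"
proof -
  have "dbr b a = - tswap sm (dbr a b)"
    using assms(1) unfolding double_bracket_def by blast
  then show ?thesis using assms(2) by (simp add: tswap_def fun_eq_iff)
qed

definition moment_bracket ::
  "('k::field \<Rightarrow> 'a::ring_1 \<Rightarrow> 'a) \<Rightarrow> ('i \<Rightarrow> 'a) \<Rightarrow> 'i set \<Rightarrow> 'a \<Rightarrow> ('a, 'k) tens2" where
  "moment_bracket sm e I a = (\<Sum>s\<in>I. tens sm (a * e s) (e s) - tens sm (e s) (e s * a))"

lemma moment_map_bracket:
  assumes "double_bracket sm e I dbr" and "moment_map sm e I dbr \<mu>"
  shows "dbr \<mu> a = moment_bracket sm e I a"
proof -
  obtain \<mu>s where \<mu>: "\<mu> = (\<Sum>s\<in>I. \<mu>s s)"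
    and \<mu>s: "\<forall>s\<in>I. \<forall>a. dbr (\<mu>s s) a = tens sm (a * e s) (e s) - tens sm (e s) (e s * a)"
    using assms(2) unfolding moment_map_def by blast
  show ?thesis
    unfolding \<mu> double_bracket_sum_left[OF assms(1)] moment_bracket_def
    using \<mu>s by (intro sum.cong) auto
qed

lemma moment_map_diff_in_Cas:
  assumes "double_bracket sm e I dbr" and "moment_map sm e I dbr \<mu>" "moment_map sm e I dbr \<mu>'"
  shows "\<mu>' - \<mu> \<in> Cas dbr"
  using assms by (simp add: Cas_def double_bracket_diff_left moment_map_bracket fun_eq_iff)

lemma Bset_subset_Cas:
  assumes "double_bracket sm e I dbr"
  shows "Bset sm e I \<subseteq> Cas dbr"
  using assms unfolding double_bracket_def Cas_def by blast

lemma Cas_subset_Bset: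
  assumes ka: "k_algebra sm" and idem: "idem_system e I" and db: "double_bracket sm e I dbr"
    and "moment_map sm e I dbr \<mu>"
  shows "Cas dbr \<subseteq> Bset sm e I"
proof
  fix a assume "a \<in> Cas dbr"
  have vs: "vector_space sm" using ka unfolding k_algebra_def by blast
  obtain \<mu>s where \<mu>s:
    "\<forall>s\<in>I. \<forall>a. dbr (\<mu>s s) a = tens sm (a * e s) (e s) - tens sm (e s) (e s * a)"
    using \<open>moment_map sm e I dbr \<mu>\<close> unfolding moment_map_def by blast
  have "\<exists>c. a * e s = sm c (e s)" if "s \<in> I" for s
  proof (cases "e s = 0")
    case True
    interpret vector_space sm by (rule vs)
    show ?thesis using True by (metis mult_zero_right scale_zero_left)
  next
    case False
    have "dbr (\<mu>s s) a = 0"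
      using double_bracket_zero_right_imp_zero_left[OF db] \<open>a \<in> Cas dbr\<close> by (simp add: Cas_def)
    then have "tens sm (a * e s) (e s) = tens sm (e s) (e s * a)"
      using \<mu>s \<open>s \<in> I\<close> by simp
    then show ?thesis using tens_eq_imp_scalar_multiple[OF vs False] by blast
  qed
  then obtain c where c: "\<forall>s\<in>I. a * e s = sm (c s) (e s)" by metis
  have "a = a * (\<Sum>s\<in>I. e s)" using idem unfolding idem_system_def by simp
  also have "\<dots> = (\<Sum>s\<in>I. sm (c s) (e s))" using c by (simp add: sum_distrib_left)
  finally show "a \<in> Bset sm e I" unfolding Bset_def by blast
qed

lemma Cas_eq_Bset:
  assumes "k_algebra sm" "idem_system e I" "double_bracket sm e I dbr" "moment_map sm e I dbr \<mu>"
  shows "Cas dbr = Bset sm e I"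
  using Cas_subset_Bset[OF assms] Bset_subset_Cas[OF assms(3)] by blast

lemma tmap_zero: "tmap sm2 \<phi> 0 = 0"
  by (auto simp: tmap_def fun_eq_iff)

lemma tmap_add: "tmap sm2 \<phi> (t + t') = tmap sm2 \<phi> t + tmap sm2 \<phi> t'"
  by (auto simp: tmap_def fun_eq_iff)

lemma tmap_diff: "tmap sm2 \<phi> (t - t') = tmap sm2 \<phi> t - tmap sm2 \<phi> t'"
  by (auto simp: tmap_def fun_eq_iff)

lemma tmap_sum: "tmap sm2 \<phi> (sum f J) = (\<Sum>s\<in>J. tmap sm2 \<phi> (f s))"
proof (induction J rule: infinite_finite_induct)
  case (insert x F)
  then show ?case by (simp only: sum.insert[OF insert(1,2)] tmap_add)
next
  case (infinite A)
  then show ?case by (simp only: sum.infinite[OF infinite] tmap_zero)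
qed (simp only: sum.empty tmap_zero)

lemma tmap_tens:
  assumes "\<forall>x y. \<phi> (x + y) = \<phi> x + \<phi> y" and "\<forall>c x. \<phi> (sm1 c x) = sm2 c (\<phi> x)"
  shows "tmap sm2 \<phi> (tens sm1 x y) = tens sm2 (\<phi> x) (\<phi> y)"
proof -
  have "bilin sm1 (\<lambda>x y. f (\<phi> x) (\<phi> y))" if "bilin sm2 f" for f
    using that assms unfolding bilin_def by simp
  then show ?thesis by (auto simp: tmap_def tens_def fun_eq_iff)
qed

lemma tmap_moment_bracket:
  assumes "\<forall>x y. \<phi> (x + y) = \<phi> x + \<phi> y \<and> \<phi> (x * y) = \<phi> x * \<phi> y"
    and "\<forall>c x. \<phi> (sm1 c x) = sm2 c (\<phi> x)" and "\<forall>s\<in>I. \<phi> (e1 s) = e2 s"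
  shows "tmap sm2 \<phi> (moment_bracket sm1 e1 I a) = moment_bracket sm2 e2 I (\<phi> a)"
  unfolding moment_bracket_def tmap_sum tmap_diff
  using assms tmap_tens[of \<phi> sm1 sm2] by (intro sum.cong) auto

lemma dp_iso_moment_map_diff_in_Cas:
  assumes iso: "dp_iso sm1 e1 dbr1 sm2 e2 dbr2 I \<phi>"
    and db1: "double_bracket sm1 e1 I dbr1" and db2: "double_bracket sm2 e2 I dbr2"
    and \<mu>1: "moment_map sm1 e1 I dbr1 \<mu>1" and \<mu>2: "moment_map sm2 e2 I dbr2 \<mu>2"
  shows "\<mu>2 - \<phi> \<mu>1 \<in> Cas dbr2"
  unfolding Cas_def
proof (intro CollectI allI)
  fix b
  have \<phi>: "bij \<phi>" "\<forall>x y. \<phi> (x + y) = \<phi> x + \<phi> y \<and> \<phi> (x * y) = \<phi> x * \<phi> y"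
    "\<forall>c x. \<phi> (sm1 c x) = sm2 c (\<phi> x)" "\<forall>s\<in>I. \<phi> (e1 s) = e2 s"
    "\<forall>a b. dbr2 (\<phi> a) (\<phi> b) = tmap sm2 \<phi> (dbr1 a b)"
    using iso unfolding dp_iso_def by blast+
  obtain a where b: "b = \<phi> a" using \<phi>(1) by (metis bij_pointE)
  have "dbr2 (\<phi> \<mu>1) (\<phi> a) = moment_bracket sm2 e2 I (\<phi> a)"
    using \<phi>(5) moment_map_bracket[OF db1 \<mu>1] tmap_moment_bracket[OF \<phi>(2-4)] by simp
  then show "dbr2 (\<mu>2 - \<phi> \<mu>1) b = 0"
    using moment_map_bracket[OF db2 \<mu>2] by (simp add: b double_bracket_diff_left[OF db2])
qed

theorem mainTheorem9:
  fixes sm1 :: "'k::field_char_0 \<Rightarrow> 'a::ring_1 \<Rightarrow> 'a"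
    and sm2 :: "'k \<Rightarrow> 'b::ring_1 \<Rightarrow> 'b"
    and I :: "'i set"
    and e1 :: "'i \<Rightarrow> 'a" and e2 :: "'i \<Rightarrow> 'b"
    and dbr1 :: "'a \<Rightarrow> 'a \<Rightarrow> ('a, 'k) tens2"
    and dbr2 :: "'b \<Rightarrow> 'b \<Rightarrow> ('b, 'k) tens2"
    and \<phi> :: "'a \<Rightarrow> 'b" and \<mu>1 :: 'a and \<mu>2 :: 'b
  assumes "k_algebra sm1" and "fin_gen sm1"
    and "k_algebra sm2" and "fin_gen sm2"
    and "idem_system e1 I" and "idem_system e2 I"
    and "double_poisson sm1 e1 I dbr1"
    and "double_poisson sm2 e2 I dbr2"
    and "dp_iso sm1 e1 dbr1 sm2 e2 dbr2 I \<phi>"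
    and "moment_map sm1 e1 I dbr1 \<mu>1"
    and "moment_map sm2 e2 I dbr2 \<mu>2"
  shows "\<mu>2 - \<phi> \<mu>1 \<in> Bset sm2 e2 I
    \<and> Cas dbr1 = Bset sm1 e1 I
    \<and> Cas dbr2 = Bset sm2 e2 I
    \<and> (\<forall>\<mu>'. moment_map sm1 e1 I dbr1 \<mu>' \<longrightarrow> \<mu>' - \<mu>1 \<in> Bset sm1 e1 I)"
proof -
  have db1: "double_bracket sm1 e1 I dbr1" and db2: "double_bracket sm2 e2 I dbr2"
    using assms(7,8) unfolding double_poisson_def by blast+
  have Cas1: "Cas dbr1 = Bset sm1 e1 I"
    using Cas_eq_Bset[OF assms(1,5) db1 assms(10)] .
  have Cas2: "Cas dbr2 = Bset sm2 e2 I"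
    using Cas_eq_Bset[OF assms(3,6) db2 assms(11)] .
  show ?thesis
    using dp_iso_moment_map_diff_in_Cas[OF assms(9) db1 db2 assms(10,11)]
      moment_map_diff_in_Cas[OF db1 assms(10)] Cas1 Cas2 by blast
qed

end
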